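(* Let $F_2=\langle r,s\mid\ \rangle$ be the free group of rank two and $\phi_*\colon F_2\to F_2$ the automorphism $r\mapsto s$, $s\mapsto rs$. Then $$\{\chi_\rho\in X(F_2,\mathrm{SL}(2,\mathbb{C}))\mid \phi^*(\chi_\rho)=\overline{\chi_\rho}\}\cong\{x\in\mathbb{C}\mid |x-1|=1\},$$ the homeomorphism being given by $x=\mathrm{trace}(\rho(s))=\chi_\rho(s)$.
   Context: $X(F_2,\mathrm{SL}(2,\mathbb{C}))$ is the $\mathrm{SL}(2,\mathbb{C})$-character variety of $F_2$, whose points are characters $\chi_\rho(\gamma)=\mathrm{trace}(\rho(\gamma))$ of representations $\rho\colon F_2\to\mathrm{SL}(2,\mathbb{C})$. $\phi^*(\chi)=\chi\circ\phi_*$, and $\overline{\chi}(\gamma)=\overline{\chi(\gamma)}$. *)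

theory Defs
  imports "HOL-Analysis.Analysis"
begin

datatype gen = Gr | Gs

text \<open>Words in the generators and their inverses; (g, True) denotes g^-1.
  Elements of F_2 are represented by (not necessarily reduced) words.\<close>
type_synonym word = "(gen \<times> bool) list"

definition letter_mat :: "(gen \<Rightarrow> complex^2^2) \<Rightarrow> gen \<times> bool \<Rightarrow> complex^2^2" where
  "letter_mat \<rho> l = (if snd l then matrix_inv (\<rho> (fst l)) else \<rho> (fst l))"

fun rep_word :: "(gen \<Rightarrow> complex^2^2) \<Rightarrow> word \<Rightarrow> complex^2^2" where
  "rep_word \<rho> [] = mat 1"
| "rep_word \<rho> (l # w) = letter_mat \<rho> l ** rep_word \<rho> w"

definition SL2_rep :: "(gen \<Rightarrow> complex^2^2) \<Rightarrow> bool" where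
  "SL2_rep \<rho> \<longleftrightarrow> (\<forall>g. det (\<rho> g) = 1)"

definition character :: "(gen \<Rightarrow> complex^2^2) \<Rightarrow> word \<Rightarrow> complex" where
  "character \<rho> w = trace (rep_word \<rho> w)"

text \<open>The character variety X(F_2, SL(2,C)), as a subspace of the space of functions
  F_2 \<rightarrow> C (product topology of pointwise convergence).\<close>
definition char_variety :: "(word \<Rightarrow> complex) set" where
  "char_variety = {\<psi>. \<exists>\<rho>. SL2_rep \<rho> \<and> \<psi> = character \<rho>}"

fun phi_letter :: "gen \<times> bool \<Rightarrow> word" where
  "phi_letter (Gr, False) = [(Gs, False)]"
| "phi_letter (Gs, False) = [(Gr, False), (Gs, False)]"
| "phi_letter (Gr, True) = [(Gs, True)]"
| "phi_letter (Gs, True) = [(Gs, True), (Gr, True)]"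

definition phi_word :: "word \<Rightarrow> word" where
  "phi_word w = concat (map phi_letter w)"

definition phi_pull :: "(word \<Rightarrow> complex) \<Rightarrow> word \<Rightarrow> complex" where
  "phi_pull \<psi> = \<psi> \<circ> phi_word"

end

theory Submission
  imports Defs
begin

text \<open>By Cayley-Hamilton, every product of A, B \<in> SL(2,C) and their inverses is a combination
  x I + y A + z B + t AB whose coefficients are polynomials in the trace coordinates
  a = tr A, b = tr B, c = tr AB (Fricke). Hence a character is a polynomial function of (a, b, c),
  every triple occurs, and distinct triples give distinct characters. In these coordinates
  \<phi>^* acts by (a, b, c) \<mapsto> (b, c, bc - a) and complex conjugation acts coordinatewise, so
  \<phi>^*\<chi> = conj \<chi> means a = c = conj b and b conj b = b + conj b, i.e. |b - 1| = 1. The inverse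
  of \<chi> \<mapsto> \<chi>(s) is therefore y \<mapsto> (the character with coordinates (conj y, y, conj y)),
  which is continuous since each of its values is a polynomial in y and conj y.\<close>

lemma mat2_eq_iff:
  "(M::'a^2^2) = N \<longleftrightarrow> M$1$1 = N$1$1 \<and> M$1$2 = N$1$2 \<and> M$2$1 = N$2$1 \<and> M$2$2 = N$2$2"
  by (auto simp: vec_eq_iff forall_2)

lemma matrix_mult_2_nth:
  "((M::'a::semiring_1^2^2) ** N)$i$j = M$i$1 * N$1$j + M$i$2 * N$2$j"
  by (simp add: matrix_matrix_mult_def sum_2)

lemma trace_2: "trace (M::'a::semiring_1^2^2) = M$1$1 + M$2$2"
  by (simp add: trace_def sum_2)

lemma mat_nth: "(mat x :: 'a::zero^'n^'n)$i$j = (if i = j then x else 0)"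
  by (simp add: mat_def)

lemma matrix_inv_inverse:
  fixes A :: "'a::semiring_1^'n^'n"
  assumes "invertible A"
  shows "A ** matrix_inv A = mat 1" "matrix_inv A ** A = mat 1"
proof -
  have "A ** matrix_inv A = mat 1 \<and> matrix_inv A ** A = mat 1"
    using assms unfolding invertible_def matrix_inv_def by (rule someI_ex)
  then show "A ** matrix_inv A = mat 1" "matrix_inv A ** A = mat 1" by simp_all
qed

lemma matrix_inv_unique:
  fixes A M :: "'a::semiring_1^'n^'n"
  assumes "A ** M = mat 1" "M ** A = mat 1"
  shows "matrix_inv A = M"
proof -
  have "invertible A" using assms unfolding invertible_def by blast
  have "matrix_inv A = matrix_inv A ** (A ** M)" using assms by simp
  also have "\<dots> = M" by (simp add: matrix_mul_assoc matrix_inv_inverse[OF \<open>invertible A\<close>])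
  finally show ?thesis .
qed

lemma matrix_inv_mult:
  fixes A B :: "'a::semiring_1^'n^'n"
  assumes "invertible A" "invertible B"
  shows "matrix_inv (A ** B) = matrix_inv B ** matrix_inv A"
proof (rule matrix_inv_unique)
  have "A ** B ** (matrix_inv B ** matrix_inv A) = A ** (B ** matrix_inv B) ** matrix_inv A"
    by (simp add: matrix_mul_assoc)
  then show "A ** B ** (matrix_inv B ** matrix_inv A) = mat 1"
    by (simp add: matrix_inv_inverse assms)
  have "matrix_inv B ** matrix_inv A ** (A ** B) = matrix_inv B ** (matrix_inv A ** A) ** B"
    by (simp add: matrix_mul_assoc)
  then show "matrix_inv B ** matrix_inv A ** (A ** B) = mat 1"
    by (simp add: matrix_inv_inverse assms)
qed

lemma matrix_inv_SL2:
  fixes A :: "'a::comm_ring_1^2^2"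
  assumes "det A = 1"
  shows "matrix_inv A = mat (trace A) - A"
  using assms by (intro matrix_inv_unique)
    (simp_all add: mat2_eq_iff matrix_mult_2_nth trace_2 mat_nth det_2 algebra_simps)

type_synonym coeffs4 = "complex \<times> complex \<times> complex \<times> complex"

fun fricke_mat :: "coeffs4 \<Rightarrow> complex^2^2 \<Rightarrow> complex^2^2 \<Rightarrow> complex^2^2" where
  "fricke_mat (x, y, z, t) A B = mat x + mat y ** A + mat z ** B + mat t ** (A ** B)"

text \<open>Left multiplication by a letter, via M^2 = (tr M) M - I and M^-1 = (tr M) I - M for M \<in> SL(2)
  and the polarised identity BA = (c - ab) I + b A + a B - AB.\<close>
fun fricke_step :: "complex \<Rightarrow> complex \<Rightarrow> complex \<Rightarrow> gen \<times> bool \<Rightarrow> coeffs4 \<Rightarrow> coeffs4" where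
  "fricke_step a b c (Gr, False) (x, y, z, t) = (- y, x + a * y, - t, z + a * t)"
| "fricke_step a b c (Gr, True) (x, y, z, t) = (a * x + y, - x, a * z + t, - z)"
| "fricke_step a b c (Gs, False) (x, y, z, t) =
     ((c - a * b) * y - z - a * t, b * y + t, x + a * y + b * z + c * t, - y)"
| "fricke_step a b c (Gs, True) (x, y, z, t) =
     (b * x - (c - a * b) * y + z + a * t, - t, - x - a * y - c * t, y + b * t)"

fun fricke_coeffs :: "complex \<Rightarrow> complex \<Rightarrow> complex \<Rightarrow> word \<Rightarrow> coeffs4" where
  "fricke_coeffs a b c [] = (1, 0, 0, 0)"
| "fricke_coeffs a b c (l # w) = fricke_step a b c l (fricke_coeffs a b c w)"

fun fricke_char :: "complex \<times> complex \<times> complex \<Rightarrow> word \<Rightarrow> complex" where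
  "fricke_char (a, b, c) w =
     (case fricke_coeffs a b c w of (x, y, z, t) \<Rightarrow> 2 * x + a * y + b * z + c * t)"

definition trace_coords :: "(gen \<Rightarrow> complex^2^2) \<Rightarrow> complex \<times> complex \<times> complex" where
  "trace_coords \<rho> = (trace (\<rho> Gr), trace (\<rho> Gs), trace (\<rho> Gr ** \<rho> Gs))"

lemma letter_mat_fricke_mat:
  assumes "SL2_rep \<rho>"
  shows "letter_mat \<rho> l ** fricke_mat v (\<rho> Gr) (\<rho> Gs)
    = fricke_mat (fricke_step (trace (\<rho> Gr)) (trace (\<rho> Gs)) (trace (\<rho> Gr ** \<rho> Gs)) l v)
        (\<rho> Gr) (\<rho> Gs)"
proof -
  obtain g i x y z t where l: "l = (g, i)" and v: "v = (x, y, z, t)"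
    by (metis prod_cases4 prod.exhaust)
  define A B where "A = \<rho> Gr" and "B = \<rho> Gs"
  have "det A = 1" "det B = 1" using assms by (simp_all add: SL2_rep_def A_def B_def)
  then have letters: "letter_mat \<rho> (Gr, False) = A" "letter_mat \<rho> (Gr, True) = mat (trace A) - A"
    "letter_mat \<rho> (Gs, False) = B" "letter_mat \<rho> (Gs, True) = mat (trace B) - B"
    by (simp_all add: letter_mat_def matrix_inv_SL2 A_def B_def)
  have "A$1$1 * A$2$2 = 1 + A$1$2 * A$2$1" "B$1$1 * B$2$2 = 1 + B$1$2 * B$2$1"
    using \<open>det A = 1\<close> \<open>det B = 1\<close> by (simp_all add: det_2 algebra_simps)
  then show ?thesis
    unfolding l v A_def[symmetric] B_def[symmetric]
    by (induct g; induct i; simp add: letters mat2_eq_iff matrix_mult_2_nth trace_2 mat_nth;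
        intro conjI; algebra)
qed

lemma rep_word_eq_fricke_mat:
  assumes "SL2_rep \<rho>"
  shows "rep_word \<rho> w = fricke_mat
    (fricke_coeffs (trace (\<rho> Gr)) (trace (\<rho> Gs)) (trace (\<rho> Gr ** \<rho> Gs)) w) (\<rho> Gr) (\<rho> Gs)"
  by (induction w) (simp_all add: letter_mat_fricke_mat[OF assms])

lemma character_eq_fricke_char:
  assumes "SL2_rep \<rho>"
  shows "character \<rho> = fricke_char (trace_coords \<rho>)"
proof
  fix w
  obtain x y z t where
    "fricke_coeffs (trace (\<rho> Gr)) (trace (\<rho> Gs)) (trace (\<rho> Gr ** \<rho> Gs)) w = (x, y, z, t)"
    by (metis prod_cases4)
  then show "character \<rho> w = fricke_char (trace_coords \<rho>) w"
    by (simp add: character_def trace_coords_def rep_word_eq_fricke_mat[OF assms] trace_add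
        trace_2 matrix_mult_2_nth mat_nth algebra_simps)
qed

lemma fricke_char_generators:
  "fricke_char (a, b, c) [(Gr, False)] = a"
  "fricke_char (a, b, c) [(Gs, False)] = b"
  "fricke_char (a, b, c) [(Gr, False), (Gs, False)] = c"
  by simp_all

lemma inj_fricke_char: "inj fricke_char"
proof (rule injI)
  fix p q :: "complex \<times> complex \<times> complex"
  assume eq: "fricke_char p = fricke_char q"
  obtain a b c a' b' c' where "p = (a, b, c)" "q = (a', b', c')" by (metis prod_cases3)
  with eq fricke_char_generators show "p = q" by metis
qed

lemma fricke_coeffs_cnj:
  "fricke_coeffs (cnj a) (cnj b) (cnj c) w
    = map_prod cnj (map_prod cnj (map_prod cnj cnj)) (fricke_coeffs a b c w)"
proof (induction w)
  case Nil
  then show ?case by simp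
next
  case (Cons l w)
  obtain g i where l: "l = (g, i)" by fastforce
  obtain x y z t where "fricke_coeffs a b c w = (x, y, z, t)" by (metis prod_cases4)
  with Cons.IH show ?case unfolding l by (induct g; induct i; simp)
qed

lemma cnj_fricke_char: "cnj (fricke_char (a, b, c) w) = fricke_char (cnj a, cnj b, cnj c) w"
  by (simp add: fricke_coeffs_cnj split: prod.split)

lemma continuous_on_fricke_coeffs:
  assumes "continuous_on S fa" "continuous_on S fb" "continuous_on S fc"
  shows "continuous_on S (\<lambda>s. fricke_coeffs (fa s) (fb s) (fc s) w)"
proof (induction w)
  case Nil
  then show ?case by simp
next
  case (Cons l w)
  define x y z t where "x s = fst (fricke_coeffs (fa s) (fb s) (fc s) w)"
    and "y s = fst (snd (fricke_coeffs (fa s) (fb s) (fc s) w))"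
    and "z s = fst (snd (snd (fricke_coeffs (fa s) (fb s) (fc s) w)))"
    and "t s = snd (snd (snd (fricke_coeffs (fa s) (fb s) (fc s) w)))" for s
  have components: "continuous_on S x" "continuous_on S y" "continuous_on S z" "continuous_on S t"
    using Cons.IH unfolding x_def y_def z_def t_def by (auto intro!: continuous_intros)
  obtain g i where l: "l = (g, i)" by fastforce
  have expand: "(\<lambda>s. fricke_coeffs (fa s) (fb s) (fc s) (l # w))
    = (\<lambda>s. fricke_step (fa s) (fb s) (fc s) (g, i) (x s, y s, z s, t s))"
    by (simp add: l x_def y_def z_def t_def)
  show ?case
    unfolding expand by (induct g; induct i; simp) (auto intro!: continuous_intros assms components)
qed

lemma continuous_on_fricke_char:
  assumes "continuous_on S fa" "continuous_on S fb" "continuous_on S fc"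
  shows "continuous_on S (\<lambda>s. fricke_char (fa s, fb s, fc s) w)"
  using continuous_on_fricke_coeffs[OF assms, of w]
  by (simp add: prod.case_eq_if) (auto intro!: continuous_intros assms)

lemma exists_SL2_rep_trace_coords: "\<exists>\<rho>. SL2_rep \<rho> \<and> trace_coords \<rho> = p"
proof -
  obtain a b c where p: "p = (a, b, c)" by (metis prod_cases3)
  obtain \<zeta> where \<zeta>_root: "\<zeta>^2 + c * \<zeta> + 1 = 0"
  proof
    define s where "s = csqrt (c^2 - 4)"
    have "s^2 = c^2 - 4" by (simp add: s_def)
    then show "((s - c) / 2)^2 + c * ((s - c) / 2) + 1 = 0"
      by (simp add: power2_eq_square field_simps) algebra
  qed
  then have "\<zeta> \<noteq> 0" by auto
  define A :: "complex^2^2" where "A = (\<chi> i j. if i = 1 \<and> j = 1 then a else if i = 1 \<and> j = 2 then 1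
     else if i = 2 \<and> j = 1 then -1 else 0)"
  define B :: "complex^2^2" where "B = (\<chi> i j. if i = 1 \<and> j = 1 then 0 else if i = 1 \<and> j = 2 then \<zeta>
     else if i = 2 \<and> j = 1 then - 1 / \<zeta> else b)"
  define \<rho> where "\<rho> g = (case g of Gr \<Rightarrow> A | Gs \<Rightarrow> B)" for g
  have "SL2_rep \<rho>"
    using \<open>\<zeta> \<noteq> 0\<close> by (simp add: SL2_rep_def \<rho>_def A_def B_def det_2 split: gen.split)
  have "trace (A ** B) = - 1 / \<zeta> - \<zeta>"
    by (simp add: A_def B_def trace_2 matrix_mult_2_nth)
  also have "\<dots> = c"
    using \<zeta>_root \<open>\<zeta> \<noteq> 0\<close> by (simp add: field_simps power2_eq_square) algebra
  finally have "trace_coords \<rho> = p"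
    by (simp add: trace_coords_def p \<rho>_def A_def B_def trace_2)
  with \<open>SL2_rep \<rho>\<close> show ?thesis by blast
qed

lemma char_variety_eq_range_fricke_char: "char_variety = range fricke_char"
proof (intro equalityI subsetI)
  fix \<psi> assume "\<psi> \<in> char_variety"
  then obtain \<rho> where "SL2_rep \<rho>" "\<psi> = character \<rho>"
    unfolding char_variety_def by blast
  then have "\<psi> = fricke_char (trace_coords \<rho>)"
    by (simp add: character_eq_fricke_char)
  then show "\<psi> \<in> range fricke_char" by (rule range_eqI)
next
  fix \<psi> assume "\<psi> \<in> range fricke_char"
  then obtain p where p: "\<psi> = fricke_char p" by blast
  obtain \<rho> where "SL2_rep \<rho>" "trace_coords \<rho> = p"
    using exists_SL2_rep_trace_coords by blast
  then have "\<psi> = character \<rho>"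
    by (simp add: character_eq_fricke_char p)
  with \<open>SL2_rep \<rho>\<close> show "\<psi> \<in> char_variety"
    unfolding char_variety_def by blast
qed

fun phi_rep :: "(gen \<Rightarrow> complex^2^2) \<Rightarrow> gen \<Rightarrow> complex^2^2" where
  "phi_rep \<rho> Gr = \<rho> Gs"
| "phi_rep \<rho> Gs = \<rho> Gr ** \<rho> Gs"

lemma SL2_rep_phi_rep:
  assumes "SL2_rep \<rho>"
  shows "SL2_rep (phi_rep \<rho>)"
  unfolding SL2_rep_def
proof
  show "det (phi_rep \<rho> g) = 1" for g
    using assms by (cases g) (simp_all add: SL2_rep_def det_mul)
qed

lemma rep_word_append: "rep_word \<rho> (u @ v) = rep_word \<rho> u ** rep_word \<rho> v"
  by (induction u) (simp_all add: matrix_mul_assoc)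

lemma rep_word_phi_word:
  assumes "SL2_rep \<rho>"
  shows "rep_word \<rho> (phi_word w) = rep_word (phi_rep \<rho>) w"
proof (induction w)
  case Nil
  then show ?case by (simp add: phi_word_def)
next
  case (Cons l w)
  have "invertible (\<rho> g)" for g
    using assms by (simp add: SL2_rep_def invertible_det_nz)
  then have "matrix_inv (\<rho> Gr ** \<rho> Gs) = matrix_inv (\<rho> Gs) ** matrix_inv (\<rho> Gr)"
    by (simp add: matrix_inv_mult)
  moreover obtain g i where "l = (g, i)" by fastforce
  ultimately show ?case
    using Cons.IH unfolding phi_word_def
    by (induct g; induct i; simp add: rep_word_append letter_mat_def matrix_mul_assoc)
qed

lemma phi_pull_character: "SL2_rep \<rho> \<Longrightarrow> phi_pull (character \<rho>) = character (phi_rep \<rho>)"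
  by (simp add: phi_pull_def character_def rep_word_phi_word fun_eq_iff)

fun phi_coords :: "complex \<times> complex \<times> complex \<Rightarrow> complex \<times> complex \<times> complex" where
  "phi_coords (a, b, c) = (b, c, b * c - a)"

lemma phi_pull_fricke_char: "phi_pull (fricke_char p) = fricke_char (phi_coords p)"
proof -
  obtain \<rho> where \<rho>: "SL2_rep \<rho>" "trace_coords \<rho> = p"
    using exists_SL2_rep_trace_coords by blast
  obtain a b c where p: "p = (a, b, c)" by (metis prod_cases3)
  have "trace (\<rho> Gs ** (\<rho> Gr ** \<rho> Gs)) = character \<rho> [(Gs, False), (Gr, False), (Gs, False)]"
    by (simp add: character_def letter_mat_def)
  also have "\<dots> = b * c - a"
    by (simp add: character_eq_fricke_char \<rho> p)
  finally have phi_coords: "trace_coords (phi_rep \<rho>) = phi_coords p"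
    using \<rho>(2) by (simp add: trace_coords_def p)
  have "phi_pull (fricke_char p) = phi_pull (character \<rho>)"
    by (simp add: character_eq_fricke_char \<rho>)
  also have "\<dots> = character (phi_rep \<rho>)"
    by (rule phi_pull_character[OF \<rho>(1)])
  also have "\<dots> = fricke_char (phi_coords p)"
    by (simp add: character_eq_fricke_char SL2_rep_phi_rep \<rho>(1) phi_coords)
  finally show ?thesis .
qed

lemma cmod_diff_1_eq_1_iff: "cmod (y - 1) = 1 \<longleftrightarrow> cnj y * y = y + cnj y"
  by (simp add: cmod_def complex_eq_iff power2_eq_square algebra_simps)

lemma phi_coords_eq_cnj_iff:
  "phi_coords (a, b, c) = (cnj a, cnj b, cnj c) \<longleftrightarrow> a = cnj b \<and> c = cnj b \<and> cmod (b - 1) = 1"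
  unfolding cmod_diff_1_eq_1_iff by (auto simp: algebra_simps)

lemma phi_twisted_fixed_characters:
  "{\<psi> \<in> char_variety. phi_pull \<psi> = (\<lambda>w. cnj (\<psi> w))}
    = (\<lambda>y. fricke_char (cnj y, y, cnj y)) ` {y. cmod (y - 1) = 1}"
proof -
  have "phi_pull (fricke_char (a, b, c)) = (\<lambda>w. cnj (fricke_char (a, b, c) w))
      \<longleftrightarrow> a = cnj b \<and> c = cnj b \<and> cmod (b - 1) = 1" for a b c
    unfolding phi_pull_fricke_char cnj_fricke_char inj_eq[OF inj_fricke_char]
    by (rule phi_coords_eq_cnj_iff)
  then show ?thesis
    unfolding char_variety_eq_range_fricke_char by force
qed

theorem lemma6p4:
  shows "\<exists>g. homeomorphism
           {\<psi> \<in> char_variety. phi_pull \<psi> = (\<lambda>w. cnj (\<psi> w))}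
           {x::complex. cmod (x - 1) = 1}
           (\<lambda>\<psi>. \<psi> [(Gs, False)]) g"
proof -
  let ?C = "{x::complex. cmod (x - 1) = 1}"
  let ?g = "\<lambda>y. fricke_char (cnj y, y, cnj y)"
  have "homeomorphism (?g ` ?C) ?C (\<lambda>\<psi>. \<psi> [(Gs, False)]) ?g"
  proof (rule homeomorphismI)
    show "continuous_on (?g ` ?C) (\<lambda>\<psi>. \<psi> [(Gs, False)])"
      by (rule continuous_on_subset[OF continuous_on_product_coordinates]) simp
    show "continuous_on ?C ?g"
      by (intro continuous_on_coordinatewise_then_product continuous_on_fricke_char
          continuous_on_cnj continuous_on_id)
  qed (auto simp: fricke_char_generators)
  then show ?thesis
    unfolding phi_twisted_fixed_characters by blast
qed

end
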